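(* Let $\{a_n\}_{n=1}^\infty\subset(0,1]$ and define $P_n,Q_n:\{-1,1\}^n\to\mathbb{R}$ by $P_0\equiv Q_0\equiv 1$ and \[ P_{n+1}=P_n+\varepsilon_{n+1}a_{n+1}Q_n,\qquad Q_{n+1}=\varepsilon_{n+1}a_{n+1}P_n-Q_n,\qquad n=0,1,\dots \] Then for each $n=1,2,\dots$, \[ I(P_n)=I(Q_n)=\sum_{i=1}^n a_i^2\prod_{1\le j\le n,\ j\ne i}(1+a_j^2). \]
   Context: Here $\varepsilon_i$ denotes the $i$-th coordinate function $\varepsilon_i(\delta_1,\dots,\delta_m)=\delta_i$ on $\{-1,1\}^m$ for $m\ge i$ (functions on $\{-1,1\}^n$ are regarded as functions on $\{-1,1\}^{n+1}$ not depending on the last coordinate). For $A\subseteq[n]$, $W_A=\prod_{i\in A}\varepsilon_i$ and, for $g:\{-1,1\}^n\to\mathbb{R}$, $\hat g(A)=2^{-n}\sum_{\delta\in\{-1,1\}^n}g(\delta)W_A(\delta)$. The influence is $I(g)=\sum_{A\subseteq[n]}\hat g(A)^2|A|$. *)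

theory Defs
  imports "HOL-Analysis.Analysis"
begin

(* Points of {-1,1}^n are represented as functions delta :: nat => real with
   delta i in {-1,1} for 1 <= i <= n, and delta i = 1 elsewhere (canonical padding). *)
definition cube :: "nat \<Rightarrow> (nat \<Rightarrow> real) set" where
  "cube n = {\<delta>. (\<forall>i\<in>{1..n}. \<delta> i = 1 \<or> \<delta> i = -1) \<and> (\<forall>i. i \<notin> {1..n} \<longrightarrow> \<delta> i = 1)}"

definition eps :: "nat \<Rightarrow> (nat \<Rightarrow> real) \<Rightarrow> real" where
  "eps i \<delta> = \<delta> i"

definition walsh :: "nat set \<Rightarrow> (nat \<Rightarrow> real) \<Rightarrow> real" where
  "walsh A \<delta> = (\<Prod>i\<in>A. eps i \<delta>)"

definition fcoeff :: "nat \<Rightarrow> ((nat \<Rightarrow> real) \<Rightarrow> real) \<Rightarrow> nat set \<Rightarrow> real" where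
  "fcoeff n g A = (1 / 2 ^ n) * (\<Sum>\<delta>\<in>cube n. g \<delta> * walsh A \<delta>)"

definition influence :: "nat \<Rightarrow> ((nat \<Rightarrow> real) \<Rightarrow> real) \<Rightarrow> real" where
  "influence n g = (\<Sum>A\<in>Pow {1..n}. (fcoeff n g A)^2 * real (card A))"

fun PQ :: "(nat \<Rightarrow> real) \<Rightarrow> nat \<Rightarrow> ((nat \<Rightarrow> real) \<Rightarrow> real) \<times> ((nat \<Rightarrow> real) \<Rightarrow> real)" where
  "PQ a 0 = ((\<lambda>_. 1), (\<lambda>_. 1))"
| "PQ a (Suc n) = (let (P, Q) = PQ a n in
     ((\<lambda>\<delta>. P \<delta> + eps (Suc n) \<delta> * a (Suc n) * Q \<delta>),
      (\<lambda>\<delta>. eps (Suc n) \<delta> * a (Suc n) * P \<delta> - Q \<delta>)))"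

definition Pn :: "(nat \<Rightarrow> real) \<Rightarrow> nat \<Rightarrow> (nat \<Rightarrow> real) \<Rightarrow> real" where
  "Pn a n = fst (PQ a n)"

definition Qn :: "(nat \<Rightarrow> real) \<Rightarrow> nat \<Rightarrow> (nat \<Rightarrow> real) \<Rightarrow> real" where
  "Qn a n = snd (PQ a n)"

end

theory Submission imports Defs begin

text \<open>Write \<open>F = g + \<epsilon>\<^sub>n\<^sub>+\<^sub>1 h\<close> with \<open>g, h\<close> functions on \<open>{-1,1}\<^sup>n\<close>. The Walsh coefficients of
  \<open>F\<close> on \<open>{-1,1}\<^sup>n\<^sup>+\<^sup>1\<close> are those of \<open>g\<close> at sets \<open>A \<subseteq> [n]\<close> and those of \<open>h\<close> at sets
  \<open>A \<union> {n+1}\<close>. Hence the coefficient mass \<open>M\<close> (the sum of the squared Walsh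
  coefficients) satisfies \<open>M(F) = M(g) + M(h)\<close> and the influence satisfies \<open>I(F) = I(g) + I(h) + M(h)\<close>,
  the last term because every set carrying a coefficient of \<open>h\<close> gains the element \<open>n+1\<close>. Both recursions
  \<open>P\<^sub>n\<^sub>+\<^sub>1 = P\<^sub>n + \<epsilon>\<^sub>n\<^sub>+\<^sub>1 a\<^sub>n\<^sub>+\<^sub>1 Q\<^sub>n\<close> and \<open>Q\<^sub>n\<^sub>+\<^sub>1 = -Q\<^sub>n + \<epsilon>\<^sub>n\<^sub>+\<^sub>1 a\<^sub>n\<^sub>+\<^sub>1 P\<^sub>n\<close> have this shape, so
  \<open>M(P\<^sub>n) = M(Q\<^sub>n) = \<Prod>\<^sub>j (1 + a\<^sub>j\<^sup>2)\<close> and \<open>I(P\<^sub>n) = I(Q\<^sub>n)\<close> obey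
  \<open>I\<^sub>n\<^sub>+\<^sub>1 = (1 + a\<^sub>n\<^sub>+\<^sub>1\<^sup>2) I\<^sub>n + a\<^sub>n\<^sub>+\<^sub>1\<^sup>2 M\<^sub>n\<close>, which is the recursion of the closed form.
  The identity holds for arbitrary real \<open>a\<close> and all \<open>n\<close>.\<close>

lemma cube_Suc_eq_one: "\<delta> \<in> cube n \<Longrightarrow> \<delta> (Suc n) = 1"
  unfolding cube_def by auto

lemma cube_0: "cube 0 = {\<lambda>_. 1}"
  unfolding cube_def by auto

lemma cube_Suc: "cube (Suc n) = cube n \<union> (\<lambda>\<delta>. \<delta>(Suc n := -1)) ` cube n"
proof (intro equalityI subsetI)
  fix \<delta> assume \<delta>: "\<delta> \<in> cube (Suc n)"
  show "\<delta> \<in> cube n \<union> (\<lambda>\<delta>. \<delta>(Suc n := -1)) ` cube n"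
  proof (cases "\<delta> (Suc n) = 1")
    case True
    then show ?thesis using \<delta> unfolding cube_def by (auto simp: le_Suc_eq)
  next
    case False
    then have "\<delta> (Suc n) = -1" using \<delta> unfolding cube_def by auto
    then have "\<delta> = (\<delta>(Suc n := 1))(Suc n := -1)" by auto
    moreover have "\<delta>(Suc n := 1) \<in> cube n" using \<delta> unfolding cube_def by (auto simp: le_Suc_eq)
    ultimately show ?thesis by blast
  qed
next
  have "cube n \<subseteq> cube (Suc n)" "\<And>\<delta>. \<delta> \<in> cube n \<Longrightarrow> \<delta>(Suc n := -1) \<in> cube (Suc n)"
    unfolding cube_def by (auto simp: le_Suc_eq)
  then show "\<delta> \<in> cube (Suc n)" if "\<delta> \<in> cube n \<union> (\<lambda>\<delta>. \<delta>(Suc n := -1)) ` cube n" for \<delta>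
    using that by blast
qed

lemma finite_cube: "finite (cube n)"
  by (induction n) (auto simp: cube_Suc cube_0)

lemma sum_cube_Suc:
  "(\<Sum>\<delta>\<in>cube (Suc n). f \<delta>) = (\<Sum>\<delta>\<in>cube n. f \<delta> + f (\<delta>(Suc n := -1)))"
proof -
  let ?flip = "\<lambda>\<delta>. \<delta>(Suc n := -1)"
  have disjoint: "cube n \<inter> ?flip ` cube n = {}"
    using cube_Suc_eq_one by fastforce
  have "inj_on ?flip (cube n)"
    by (rule inj_onI) (metis cube_Suc_eq_one fun_upd_triv fun_upd_upd)
  then have "(\<Sum>\<delta>\<in>?flip ` cube n. f \<delta>) = (\<Sum>\<delta>\<in>cube n. f (?flip \<delta>))"
    by (simp add: sum.reindex)
  moreover have "(\<Sum>\<delta>\<in>cube (Suc n). f \<delta>) = (\<Sum>\<delta>\<in>cube n. f \<delta>) + (\<Sum>\<delta>\<in>?flip ` cube n. f \<delta>)"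
    unfolding cube_Suc using disjoint finite_cube by (intro sum.union_disjoint) auto
  ultimately show ?thesis by (simp add: sum.distrib)
qed

lemma sum_Pow_insert:
  assumes "finite A" and "x \<notin> A"
  shows "(\<Sum>B\<in>Pow (insert x A). f B) = (\<Sum>B\<in>Pow A. f B + f (insert x B))"
proof -
  have "inj_on (insert x) (Pow A)"
    using assms(2) by (intro inj_onI) (metis PowD insert_ident subsetD)
  then have "(\<Sum>B\<in>insert x ` Pow A. f B) = (\<Sum>B\<in>Pow A. f (insert x B))"
    by (simp add: sum.reindex)
  moreover have "(\<Sum>B\<in>Pow (insert x A). f B) = (\<Sum>B\<in>Pow A. f B) + (\<Sum>B\<in>insert x ` Pow A. f B)"
    unfolding Pow_insert using assms by (intro sum.union_disjoint) auto
  ultimately show ?thesis by (simp add: sum.distrib)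
qed

lemma walsh_fun_upd:
  assumes "finite A"
  shows "walsh A (\<delta>(k := x)) = (if k \<in> A then x else 1) * walsh (A - {k}) \<delta>"
proof (cases "k \<in> A")
  case True
  have "walsh (A - {k}) (\<delta>(k := x)) = walsh (A - {k}) \<delta>"
    by (auto simp: walsh_def eps_def intro: prod.cong)
  then show ?thesis
    using prod.remove[OF assms True, of "\<lambda>i. eps i (\<delta>(k := x))"] True
    by (simp add: walsh_def eps_def)
next
  case False
  then show ?thesis by (auto simp: walsh_def eps_def intro: prod.cong)
qed

text \<open>By Parseval this is the mean of \<open>g\<^sup>2\<close> over the cube, but only its recursion is needed.\<close>
definition fourier_mass :: "nat \<Rightarrow> ((nat \<Rightarrow> real) \<Rightarrow> real) \<Rightarrow> real" where
  "fourier_mass n g = (\<Sum>A\<in>Pow {1..n}. (fcoeff n g A)\<^sup>2)"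

lemma fcoeff_scale: "fcoeff n (\<lambda>\<delta>. c * g \<delta>) A = c * fcoeff n g A"
  unfolding fcoeff_def by (simp add: sum_distrib_left algebra_simps)

lemma fourier_mass_scale: "fourier_mass n (\<lambda>\<delta>. c * g \<delta>) = c\<^sup>2 * fourier_mass n g"
  unfolding fourier_mass_def fcoeff_scale by (simp add: sum_distrib_left power_mult_distrib)

lemma influence_scale: "influence n (\<lambda>\<delta>. c * g \<delta>) = c\<^sup>2 * influence n g"
  unfolding influence_def fcoeff_scale by (simp add: sum_distrib_left power_mult_distrib algebra_simps)

lemma fourier_mass_uminus: "fourier_mass n (\<lambda>\<delta>. - g \<delta>) = fourier_mass n g"
  using fourier_mass_scale[of n "-1" g] by simp

lemma influence_uminus: "influence n (\<lambda>\<delta>. - g \<delta>) = influence n g"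
  using influence_scale[of n "-1" g] by simp

lemma fcoeff_extend:
  assumes g: "\<And>\<delta> x. g (\<delta>(Suc n := x)) = g \<delta>" and h: "\<And>\<delta> x. h (\<delta>(Suc n := x)) = h \<delta>"
    and "finite A"
  shows "fcoeff (Suc n) (\<lambda>\<delta>. g \<delta> + eps (Suc n) \<delta> * h \<delta>) A
       = (if Suc n \<in> A then fcoeff n h (A - {Suc n}) else fcoeff n g A)"
proof -
  let ?F = "\<lambda>\<delta>. g \<delta> + eps (Suc n) \<delta> * h \<delta>"
  let ?f = "if Suc n \<in> A then h else g"
  have "?F \<delta> * walsh A \<delta> + ?F (\<delta>(Suc n := -1)) * walsh A (\<delta>(Suc n := -1))
      = 2 * (?f \<delta> * walsh (A - {Suc n}) \<delta>)" if "\<delta> \<in> cube n" for \<delta>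
  proof -
    have one: "\<delta> (Suc n) = 1" using cube_Suc_eq_one[OF that] .
    have "walsh A \<delta> = walsh (A - {Suc n}) \<delta>"
      using walsh_fun_upd[OF \<open>finite A\<close>, of \<delta> "Suc n" 1] fun_upd_idem[of \<delta>, OF one]
      by simp
    moreover have "walsh A (\<delta>(Suc n := -1)) = (if Suc n \<in> A then -1 else 1) * walsh (A - {Suc n}) \<delta>"
      by (rule walsh_fun_upd[OF \<open>finite A\<close>])
    moreover have "eps (Suc n) \<delta> = 1" "eps (Suc n) (\<delta>(Suc n := -1)) = -1"
      using one by (simp_all add: eps_def)
    ultimately show ?thesis
      by (cases "Suc n \<in> A") (simp_all add: g h algebra_simps)
  qed
  then have "fcoeff (Suc n) ?F A = 1 / 2 ^ Suc n * (\<Sum>\<delta>\<in>cube n. 2 * (?f \<delta> * walsh (A - {Suc n}) \<delta>))"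
    unfolding fcoeff_def sum_cube_Suc by (intro arg_cong[where f="(*) _"] sum.cong) auto
  also have "\<dots> = fcoeff n ?f (A - {Suc n})"
    unfolding fcoeff_def by (simp add: sum_distrib_left[symmetric])
  finally show ?thesis by (simp split: if_splits)
qed

lemma
  assumes g: "\<And>\<delta> x. g (\<delta>(Suc n := x)) = g \<delta>" and h: "\<And>\<delta> x. h (\<delta>(Suc n := x)) = h \<delta>"
  shows fourier_mass_extend:
      "fourier_mass (Suc n) (\<lambda>\<delta>. g \<delta> + eps (Suc n) \<delta> * h \<delta>) = fourier_mass n g + fourier_mass n h"
    and influence_extend:
      "influence (Suc n) (\<lambda>\<delta>. g \<delta> + eps (Suc n) \<delta> * h \<delta>)
       = influence n g + influence n h + fourier_mass n h"
proof -
  let ?F = "\<lambda>\<delta>. g \<delta> + eps (Suc n) \<delta> * h \<delta>"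
  have interval: "{1..Suc n} = insert (Suc n) {1..n}" by auto
  have "finite B" and "Suc n \<notin> B" if "B \<in> Pow {1..n}" for B
    using that finite_subset by auto
  then have old: "fcoeff (Suc n) ?F B = fcoeff n g B"
    and added: "fcoeff (Suc n) ?F (insert (Suc n) B) = fcoeff n h B"
    and card: "card (insert (Suc n) B) = card B + 1" if "B \<in> Pow {1..n}" for B
    using that fcoeff_extend[OF g h] by (simp_all add: insert_Diff_if)
  have "fourier_mass (Suc n) ?F
      = (\<Sum>B\<in>Pow {1..n}. (fcoeff (Suc n) ?F B)\<^sup>2 + (fcoeff (Suc n) ?F (insert (Suc n) B))\<^sup>2)"
    unfolding fourier_mass_def interval by (rule sum_Pow_insert) auto
  also have "\<dots> = (\<Sum>B\<in>Pow {1..n}. (fcoeff n g B)\<^sup>2 + (fcoeff n h B)\<^sup>2)"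
    by (rule sum.cong) (simp_all add: old added)
  finally show "fourier_mass (Suc n) ?F = fourier_mass n g + fourier_mass n h"
    by (simp add: fourier_mass_def sum.distrib)
  have "influence (Suc n) ?F = (\<Sum>B\<in>Pow {1..n}. (fcoeff (Suc n) ?F B)\<^sup>2 * card B
      + (fcoeff (Suc n) ?F (insert (Suc n) B))\<^sup>2 * card (insert (Suc n) B))"
    unfolding influence_def interval by (rule sum_Pow_insert) auto
  also have "\<dots> = (\<Sum>B\<in>Pow {1..n}. (fcoeff n g B)\<^sup>2 * card B + (fcoeff n h B)\<^sup>2 * (card B + 1))"
    by (rule sum.cong) (simp_all add: old added card)
  finally show "influence (Suc n) ?F = influence n g + influence n h + fourier_mass n h"
    by (simp add: influence_def fourier_mass_def sum.distrib distrib_left)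
qed

lemma fourier_mass_const_0: "fourier_mass 0 (\<lambda>_. c) = c\<^sup>2"
  unfolding fourier_mass_def fcoeff_def by (simp add: cube_0 walsh_def)

lemma influence_0: "influence 0 g = 0"
  unfolding influence_def by simp

lemma sum_prod_Diff_singleton_Suc:
  fixes b c :: "nat \<Rightarrow> 'a::comm_semiring_1"
  shows "(\<Sum>i=1..Suc n. b i * (\<Prod>j\<in>{1..Suc n}-{i}. c j))
       = c (Suc n) * (\<Sum>i=1..n. b i * (\<Prod>j\<in>{1..n}-{i}. c j)) + b (Suc n) * (\<Prod>j=1..n. c j)"
proof -
  have "{1..Suc n} - {i} = insert (Suc n) ({1..n} - {i})" if "i \<in> {1..n}" for i
    using that by auto
  then have "(\<Sum>i=1..n. b i * (\<Prod>j\<in>{1..Suc n}-{i}. c j))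
      = (\<Sum>i=1..n. c (Suc n) * (b i * (\<Prod>j\<in>{1..n}-{i}. c j)))"
    by (intro sum.cong) (simp_all add: mult.left_commute)
  moreover have "{1..Suc n} - {Suc n} = {1..n}" by auto
  ultimately show ?thesis by (simp add: sum_distrib_left)
qed

lemma Pn_0: "Pn a 0 = (\<lambda>_. 1)" and Qn_0: "Qn a 0 = (\<lambda>_. 1)"
  by (simp_all add: Pn_def Qn_def)

lemma Pn_Suc: "Pn a (Suc n) = (\<lambda>\<delta>. Pn a n \<delta> + eps (Suc n) \<delta> * (a (Suc n) * Qn a n \<delta>))"
  by (simp add: Pn_def Qn_def split_beta algebra_simps)

lemma Qn_Suc: "Qn a (Suc n) = (\<lambda>\<delta>. - Qn a n \<delta> + eps (Suc n) \<delta> * (a (Suc n) * Pn a n \<delta>))"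
  by (simp add: Pn_def Qn_def split_beta algebra_simps)

lemma Pn_Qn_fun_upd:
  assumes "n < k"
  shows "Pn a n (\<delta>(k := x)) = Pn a n \<delta>" and "Qn a n (\<delta>(k := x)) = Qn a n \<delta>"
  using assms by (induction n arbitrary: \<delta>) (auto simp: Pn_0 Qn_0 Pn_Suc Qn_Suc eps_def)

lemma fourier_mass_Pn_Suc:
  "fourier_mass (Suc n) (Pn a (Suc n)) = fourier_mass n (Pn a n) + (a (Suc n))\<^sup>2 * fourier_mass n (Qn a n)"
  unfolding Pn_Suc by (subst fourier_mass_extend) (simp_all add: Pn_Qn_fun_upd fourier_mass_scale)

lemma fourier_mass_Qn_Suc:
  "fourier_mass (Suc n) (Qn a (Suc n)) = fourier_mass n (Qn a n) + (a (Suc n))\<^sup>2 * fourier_mass n (Pn a n)"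
  unfolding Qn_Suc
  by (subst fourier_mass_extend) (simp_all add: Pn_Qn_fun_upd fourier_mass_scale fourier_mass_uminus)

lemma influence_Pn_Suc:
  "influence (Suc n) (Pn a (Suc n))
   = influence n (Pn a n) + (a (Suc n))\<^sup>2 * (influence n (Qn a n) + fourier_mass n (Qn a n))"
  unfolding Pn_Suc
  by (subst influence_extend) (simp_all add: Pn_Qn_fun_upd fourier_mass_scale influence_scale algebra_simps)

lemma influence_Qn_Suc:
  "influence (Suc n) (Qn a (Suc n))
   = influence n (Qn a n) + (a (Suc n))\<^sup>2 * (influence n (Pn a n) + fourier_mass n (Pn a n))"
  unfolding Qn_Suc
  by (subst influence_extend)
     (simp_all add: Pn_Qn_fun_upd fourier_mass_scale influence_scale influence_uminus algebra_simps)

lemma fourier_mass_Pn_Qn: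
  "fourier_mass n (Pn a n) = (\<Prod>j=1..n. 1 + (a j)\<^sup>2) \<and> fourier_mass n (Qn a n) = (\<Prod>j=1..n. 1 + (a j)\<^sup>2)"
proof (induction n)
  case 0
  then show ?case by (simp add: Pn_0 Qn_0 fourier_mass_const_0)
next
  case (Suc n)
  then show ?case by (simp add: fourier_mass_Pn_Suc fourier_mass_Qn_Suc prod.nat_ivl_Suc' algebra_simps)
qed

lemma influence_Pn_Qn:
  "influence n (Pn a n) = (\<Sum>i=1..n. (a i)\<^sup>2 * (\<Prod>j\<in>{1..n}-{i}. 1 + (a j)\<^sup>2))
   \<and> influence n (Qn a n) = (\<Sum>i=1..n. (a i)\<^sup>2 * (\<Prod>j\<in>{1..n}-{i}. 1 + (a j)\<^sup>2))"
proof (induction n)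
  case 0
  then show ?case by (simp add: influence_0)
next
  case (Suc n)
  have "(\<Sum>i=1..Suc n. (a i)\<^sup>2 * (\<Prod>j\<in>{1..Suc n}-{i}. 1 + (a j)\<^sup>2))
      = (1 + (a (Suc n))\<^sup>2) * (\<Sum>i=1..n. (a i)\<^sup>2 * (\<Prod>j\<in>{1..n}-{i}. 1 + (a j)\<^sup>2))
        + (a (Suc n))\<^sup>2 * (\<Prod>j=1..n. 1 + (a j)\<^sup>2)"
    by (rule sum_prod_Diff_singleton_Suc)
  with Suc.IH show ?case
    by (simp add: influence_Pn_Suc influence_Qn_Suc fourier_mass_Pn_Qn algebra_simps)
qed

theorem proposition2:
  fixes a :: "nat \<Rightarrow> real" and n :: nat
  assumes "\<And>k. k \<ge> 1 \<Longrightarrow> 0 < a k \<and> a k \<le> 1"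
    and "n \<ge> 1"
  shows "influence n (Pn a n) = (\<Sum>i=1..n. (a i)^2 * (\<Prod>j\<in>{1..n}-{i}. 1 + (a j)^2))
       \<and> influence n (Qn a n) = (\<Sum>i=1..n. (a i)^2 * (\<Prod>j\<in>{1..n}-{i}. 1 + (a j)^2))"
  by (rule influence_Pn_Qn)

end
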